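(* Let $f\in\mathbb{R}[x,y]$ be an irreducible polynomial and let $X=V(f)=\{(x,y)\in\mathbb{R}^2: f(x,y)=0\}$. Assume $X$ is compact and connected. Then $X$ has a cell decomposition $\mathcal{A}$ with the finiteness property.
   Context: A cell decomposition of a set $X\subseteq\mathbb{R}^2$ is a partition of $X$ into (finitely or countably many) cells, each of which is a semi-algebraic set: 0-cells are points, 1-cells are subsets homeomorphic to an open interval, 2-cells are subsets homeomorphic to an open disk. A shortest-length curve in $X$ between two points $A,B\in X$ is a piecewise $C^2$ curve $\gamma$ from $A$ to $B$ lying entirely in $X$ whose length is minimal among all piecewise $C^2$ curves in $X$ from $A$ to $B$. A geodesic line segment (relative to the decomposition) is either a straight line segment or a connected arc contained (partially or entirely) in a 1-cell. A cell decomposition $\mathcal{A}$ of $X$ has the finiteness property if for every shortest-length curve $\gamma$ in $X$ between two points of $X$ and every cell $e\in\mathcal{A}$, the set $\gamma\cap e$ is either empty or has finitely many connected components, each of which is either a singleton or a geodesic line segment. *)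

theory Defs
  imports "HOL-Analysis.Analysis" "HOL-Computational_Algebra.Polynomial_Factorial"
begin

text \<open>Bivariate real polynomials R[x,y] are represented as real poly poly:
  a polynomial in y whose coefficients are polynomials in x.\<close>

definition eval2 :: "real poly poly \<Rightarrow> real \<times> real \<Rightarrow> real" where
  "eval2 f p = poly (poly f [:snd p:]) (fst p)"

definition zero_set :: "real poly poly \<Rightarrow> (real \<times> real) set" where
  "zero_set f = {p. eval2 f p = 0}"

inductive_set semialgebraic :: "(real \<times> real) set set" where
  sa_pos: "{p. 0 < eval2 g p} \<in> semialgebraic"
| sa_zero: "{p. eval2 g p = 0} \<in> semialgebraic"
| sa_union: "S \<in> semialgebraic \<Longrightarrow> T \<in> semialgebraic \<Longrightarrow> S \<union> T \<in> semialgebraic"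
| sa_compl: "S \<in> semialgebraic \<Longrightarrow> - S \<in> semialgebraic"

definition is_0cell :: "(real \<times> real) set \<Rightarrow> bool" where
  "is_0cell C \<longleftrightarrow> (\<exists>a. C = {a})"

definition is_1cell :: "(real \<times> real) set \<Rightarrow> bool" where
  "is_1cell C \<longleftrightarrow> C homeomorphic {0<..<(1::real)}"

definition is_2cell :: "(real \<times> real) set \<Rightarrow> bool" where
  "is_2cell C \<longleftrightarrow> C homeomorphic ball (0::real \<times> real) 1"

definition cell_decomposition ::
  "(real \<times> real) set set \<Rightarrow> (real \<times> real) set \<Rightarrow> bool" where
  "cell_decomposition \<A> X \<longleftrightarrow>
     countable \<A> \<and> \<Union>\<A> = X \<and> {} \<notin> \<A> \<and>
     (\<forall>C\<in>\<A>. \<forall>D\<in>\<A>. C \<noteq> D \<longrightarrow> C \<inter> D = {}) \<and>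
     (\<forall>C\<in>\<A>. C \<in> semialgebraic \<and> (is_0cell C \<or> is_1cell C \<or> is_2cell C))"

definition C2_on :: "real set \<Rightarrow> (real \<Rightarrow> real \<times> real) \<Rightarrow> bool" where
  "C2_on S g \<longleftrightarrow> (\<exists>g' g''.
     (\<forall>t\<in>S. (g has_vector_derivative g' t) (at t within S)) \<and>
     (\<forall>t\<in>S. (g' has_vector_derivative g'' t) (at t within S)) \<and>
     continuous_on S g'')"

definition piecewise_C2_curve :: "(real \<Rightarrow> real \<times> real) \<Rightarrow> bool" where
  "piecewise_C2_curve g \<longleftrightarrow> continuous_on {0..1} g \<and>
     (\<exists>(n::nat) t. t 0 = 0 \<and> t n = 1 \<and> (\<forall>i<n. t i < t (Suc i)) \<and>
        (\<forall>i<n. C2_on {t i..t (Suc i)} g))"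

definition curve_length :: "(real \<Rightarrow> real \<times> real) \<Rightarrow> real" where
  "curve_length g = (SUP nt \<in> {(n::nat, t). t 0 = 0 \<and> t n = 1 \<and> (\<forall>i<n. t i \<le> t (Suc i))}.
       (\<Sum>i<fst nt. dist (g (snd nt i)) (g (snd nt (Suc i)))))"

definition curve_in :: "(real \<times> real) set \<Rightarrow> (real \<times> real) \<Rightarrow> (real \<times> real)
    \<Rightarrow> (real \<Rightarrow> real \<times> real) \<Rightarrow> bool" where
  "curve_in X A B g \<longleftrightarrow> piecewise_C2_curve g \<and> g 0 = A \<and> g 1 = B \<and> path_image g \<subseteq> X"

definition shortest_curve :: "(real \<times> real) set \<Rightarrow> (real \<times> real) \<Rightarrow> (real \<times> real)
    \<Rightarrow> (real \<Rightarrow> real \<times> real) \<Rightarrow> bool" where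
  "shortest_curve X A B g \<longleftrightarrow> curve_in X A B g \<and>
     (\<forall>h. curve_in X A B h \<longrightarrow> curve_length g \<le> curve_length h)"

text \<open>Geodesic line segment relative to a decomposition: a straight segment
  (open, half-open or closed, nondegenerate) or a connected arc contained in a 1-cell.\<close>

definition geodesic_segment ::
  "(real \<times> real) set set \<Rightarrow> (real \<times> real) set \<Rightarrow> bool" where
  "geodesic_segment \<A> S \<longleftrightarrow>
     (\<exists>a b. a \<noteq> b \<and> open_segment a b \<subseteq> S \<and> S \<subseteq> closed_segment a b) \<or>
     (connected S \<and> (\<exists>a b. a \<in> S \<and> b \<in> S \<and> a \<noteq> b) \<and> (\<exists>D\<in>\<A>. is_1cell D \<and> S \<subseteq> D))"

definition finiteness_property ::
  "(real \<times> real) set set \<Rightarrow> (real \<times> real) set \<Rightarrow> bool" where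
  "finiteness_property \<A> X \<longleftrightarrow>
     (\<forall>A\<in>X. \<forall>B\<in>X. \<forall>g. shortest_curve X A B g \<longrightarrow>
       (\<forall>e\<in>\<A>. path_image g \<inter> e = {} \<or>
          (finite (components (path_image g \<inter> e)) \<and>
           (\<forall>S\<in>components (path_image g \<inter> e).
              (\<exists>a. S = {a}) \<or> geodesic_segment \<A> S))))"

end

theory Submission
  imports Defs "HOL-Computational_Algebra.Field_as_Ring"
begin

(* Call a box [s,s'] x [c,d] a graph box of X = V(f) if X meets it in the graph of a function
   [s,s'] -> ]c,d[, which is continuous since X is closed.  Away from the abscissae of points of X
   with f_y = 0, the implicit function theorem, made uniform by compactness, puts every point of X
   in a graph box of a fixed width.  Irreducibility leaves only finitely many exceptional abscissae:
   some combination u f + v f_y is a nonzero polynomial in x alone.  Over each maximal dyadic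
   interval on which every point of X lies in a graph box spanning the whole interval, the components
   of X are open graph arcs, the 1-cells.  All other points of X lie over exceptional or dyadic
   abscissae and each vertical slice of the compact curve X is finite, so they form countably many
   0-cells.
   A connected set K that meets a graph arc without lying in it cannot pass the graph points over
   two abscissae outside K, so each component of K on the arc contains an end of the arc and there
   are at most two of them.  Thus the finiteness property holds for all connected subsets of X. *)

section \<open>Semi-algebraic sets\<close>

lemma semialgebraic_Int: "S \<in> semialgebraic \<Longrightarrow> T \<in> semialgebraic \<Longrightarrow> S \<inter> T \<in> semialgebraic"
  using sa_compl[OF sa_union[OF sa_compl sa_compl]] by simp

lemma semialgebraic_lines:
  "{p. fst p = a} \<in> semialgebraic" "{p. snd p = a} \<in> semialgebraic"
proof -
  have "{p. fst p = a} = {p. eval2 [:[:- a, 1:], [:0:]:] p = 0}"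
    "{p. snd p = a} = {p. eval2 [:[:- a, 0:], [:1:]:] p = 0}"
    by (auto simp: eval2_def)
  then show "{p. fst p = a} \<in> semialgebraic" "{p. snd p = a} \<in> semialgebraic"
    by (simp_all only: sa_zero)
qed

lemma semialgebraic_half_planes:
  "{p. a < fst p} \<in> semialgebraic" "{p. fst p < a} \<in> semialgebraic"
  "{p. a < snd p} \<in> semialgebraic" "{p. snd p < a} \<in> semialgebraic"
proof -
  have "{p. a < fst p} = {p. 0 < eval2 [:[:- a, 1:], [:0:]:] p}"
    "{p. fst p < a} = {p. 0 < eval2 [:[:a, - 1:], [:0:]:] p}"
    "{p. a < snd p} = {p. 0 < eval2 [:[:- a, 0:], [:1:]:] p}"
    "{p. snd p < a} = {p. 0 < eval2 [:[:a, 0:], [:- 1:]:] p}"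
    by (auto simp: eval2_def)
  then show "{p. a < fst p} \<in> semialgebraic" "{p. fst p < a} \<in> semialgebraic"
    "{p. a < snd p} \<in> semialgebraic" "{p. snd p < a} \<in> semialgebraic"
    by (simp_all only: sa_pos)
qed

lemma semialgebraic_singleton: "{p} \<in> semialgebraic"
proof -
  have "{p} = {q. fst q = fst p} \<inter> {q. snd q = snd p}"
    by (auto simp: prod_eq_iff)
  then show ?thesis
    by (simp only: semialgebraic_Int semialgebraic_lines)
qed

lemma semialgebraic_Int_open_box:
  assumes "Z \<in> semialgebraic"
  shows "Z \<inter> ({s<..<s'} \<times> {c<..<d}) \<in> semialgebraic"
proof -
  have "Z \<inter> ({s<..<s'} \<times> {c<..<d}) =
      Z \<inter> {p. s < fst p} \<inter> {p. fst p < s'} \<inter> {p. c < snd p} \<inter> {p. snd p < d}"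
    by (auto simp: mem_Times_iff)
  then show ?thesis
    using assms by (simp only: semialgebraic_Int semialgebraic_half_planes)
qed

section \<open>Graph boxes\<close>

lemma connected_Int_open_closed_subset:
  assumes "connected K" "open U" "closed V" "K \<inter> U = K \<inter> V" "K \<inter> U \<noteq> {}"
  shows "K \<subseteq> U"
proof -
  have "openin (top_of_set K) (K \<inter> U)"
    using assms(2) by (rule openin_open_Int)
  moreover have "closedin (top_of_set K) (K \<inter> U)"
    unfolding assms(4) using assms(3) by (rule closedin_closed_Int)
  ultimately show ?thesis
    using assms(1,5) unfolding connected_clopen by blast
qed

definition graph_box :: "(real \<times> real) set \<Rightarrow> real \<Rightarrow> real \<Rightarrow> real \<Rightarrow> real \<Rightarrow> bool" where
  "graph_box Z s s' c d \<longleftrightarrow> (\<forall>x\<in>{s..s'}. \<exists>!y. y \<in> {c..d} \<and> (x, y) \<in> Z) \<and>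
     (\<forall>x\<in>{s..s'}. \<forall>y\<in>{c..d}. (x, y) \<in> Z \<longrightarrow> c < y \<and> y < d)"

definition graph_fun :: "(real \<times> real) set \<Rightarrow> real \<Rightarrow> real \<Rightarrow> real \<Rightarrow> real" where
  "graph_fun Z c d x = (THE y. y \<in> {c..d} \<and> (x, y) \<in> Z)"

lemma graph_box_mono:
  "graph_box Z s s' c d \<Longrightarrow> s \<le> t \<Longrightarrow> t' \<le> s' \<Longrightarrow> graph_box Z t t' c d"
  unfolding graph_box_def by auto

lemma graph_box_ex1:
  assumes "graph_box Z s s' c d" "x \<in> {s..s'}"
  shows "\<exists>!y. y \<in> {c..d} \<and> (x, y) \<in> Z"
proof -
  have "\<forall>x\<in>{s..s'}. \<exists>!y. y \<in> {c..d} \<and> (x, y) \<in> Z"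
    using assms(1) unfolding graph_box_def by (rule conjunct1)
  then show ?thesis
    using assms(2) by (rule bspec)
qed

lemma graph_box_interior:
  assumes "graph_box Z s s' c d" "x \<in> {s..s'}" "y \<in> {c..d}" "(x, y) \<in> Z"
  shows "y \<in> {c<..<d}"
proof -
  have "\<forall>x\<in>{s..s'}. \<forall>y\<in>{c..d}. (x, y) \<in> Z \<longrightarrow> c < y \<and> y < d"
    using assms(1) unfolding graph_box_def by (rule conjunct2)
  then show ?thesis
    using assms(2-4) by simp
qed

lemma graph_fun_mem:
  assumes "graph_box Z s s' c d" "x \<in> {s..s'}"
  shows "graph_fun Z c d x \<in> {c<..<d}" "(x, graph_fun Z c d x) \<in> Z"
proof -
  have "graph_fun Z c d x \<in> {c..d} \<and> (x, graph_fun Z c d x) \<in> Z"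
    unfolding graph_fun_def by (rule theI'[OF graph_box_ex1[OF assms]])
  then show "graph_fun Z c d x \<in> {c<..<d}" "(x, graph_fun Z c d x) \<in> Z"
    using graph_box_interior[OF assms] by auto
qed

lemma graph_fun_unique:
  assumes "graph_box Z s s' c d" "x \<in> {s..s'}" "y \<in> {c..d}" "(x, y) \<in> Z"
  shows "y = graph_fun Z c d x"
proof -
  have "(THE y. y \<in> {c..d} \<and> (x, y) \<in> Z) = y"
    using graph_box_ex1[OF assms(1,2)] by (rule the1_equality) (use assms(3,4) in blast)
  then show ?thesis
    unfolding graph_fun_def by simp
qed

lemma graph_box_Int_eq:
  assumes "graph_box Z s s' c d" "T \<subseteq> {s..s'}"
  shows "Z \<inter> (T \<times> {c..d}) = (\<lambda>x. (x, graph_fun Z c d x)) ` T"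
    and "Z \<inter> (T \<times> {c<..<d}) = (\<lambda>x. (x, graph_fun Z c d x)) ` T"
proof -
  have closed_sub: "Z \<inter> (T \<times> {c..d}) \<subseteq> (\<lambda>x. (x, graph_fun Z c d x)) ` T"
  proof
    fix p assume "p \<in> Z \<inter> (T \<times> {c..d})"
    then show "p \<in> (\<lambda>x. (x, graph_fun Z c d x)) ` T"
      using graph_fun_unique[OF assms(1), of "fst p" "snd p"] assms(2)
      by (intro image_eqI[of _ _ "fst p"]) auto
  qed
  have sub_open: "(\<lambda>x. (x, graph_fun Z c d x)) ` T \<subseteq> Z \<inter> (T \<times> {c<..<d})"
    using graph_fun_mem[OF assms(1)] assms(2) by auto
  have open_sub: "Z \<inter> (T \<times> {c<..<d}) \<subseteq> Z \<inter> (T \<times> {c..d})"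
    by auto
  show "Z \<inter> (T \<times> {c..d}) = (\<lambda>x. (x, graph_fun Z c d x)) ` T"
    using closed_sub sub_open open_sub by (rule subset_antisym[OF _ order_trans])
  show "Z \<inter> (T \<times> {c<..<d}) = (\<lambda>x. (x, graph_fun Z c d x)) ` T"
    using order_trans[OF open_sub closed_sub] sub_open by (rule subset_antisym)
qed

lemma graph_box_of_increasing_sign_change:
  fixes F :: "real \<times> real \<Rightarrow> real"
  assumes "c < d"
    and cont: "\<And>x. x \<in> {s..s'} \<Longrightarrow> continuous_on {c..d} (\<lambda>y. F (x, y))"
    and increasing: "\<And>x y y'. x \<in> {s..s'} \<Longrightarrow> c \<le> y \<Longrightarrow> y < y' \<Longrightarrow> y' \<le> d \<Longrightarrow> F (x, y) < F (x, y')"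
    and ends: "\<And>x. x \<in> {s..s'} \<Longrightarrow> F (x, c) < 0 \<and> 0 < F (x, d)"
  shows "graph_box {p. F p = 0} s s' c d"
  unfolding graph_box_def mem_Collect_eq
proof (intro conjI ballI impI)
  fix x assume x: "x \<in> {s..s'}"
  obtain y where y: "y \<in> {c..d}" "F (x, y) = 0"
    using IVT'[of "\<lambda>y. F (x, y)" c 0 d] ends[OF x] \<open>c < d\<close> cont[OF x] by auto
  show "\<exists>!y. y \<in> {c..d} \<and> F (x, y) = 0"
  proof (rule ex1I[of _ y])
    fix y' assume "y' \<in> {c..d} \<and> F (x, y') = 0"
    with y increasing[OF x, of y y'] increasing[OF x, of y' y] show "y' = y"
      by (cases y y' rule: linorder_cases) auto
  qed (use y in blast)
next
  fix x y assume "x \<in> {s..s'}" "y \<in> {c..d}" "F (x, y) = 0"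
  with ends[of x] have "y \<noteq> c" "y \<noteq> d"
    by auto
  with \<open>y \<in> {c..d}\<close> show "c < y" "y < d"
    by auto
qed

lemma continuous_on_graph_fun:
  assumes "closed Z" "graph_box Z s s' c d"
  shows "continuous_on {s..s'} (graph_fun Z c d)"
proof -
  have maps: "graph_fun Z c d \<in> {s..s'} \<rightarrow> {c..d}"
    using graph_fun_mem(1)[OF assms(2)] by fastforce
  have graph: "({s..s'} \<times> {c..d}) \<inter> Z = (\<lambda>x. (x, graph_fun Z c d x)) ` {s..s'}"
    using graph_box_Int_eq(1)[OF assms(2) order_refl] by (metis inf_commute)
  have "closedin (top_of_set ({s..s'} \<times> {c..d})) ((\<lambda>x. (x, graph_fun Z c d x)) ` {s..s'})"
    using closedin_closed_Int[OF assms(1), of "{s..s'} \<times> {c..d}"] unfolding graph .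
  then show ?thesis
    by (rule continuous_closed_graph_eq[OF compact_Icc maps, THEN iffD2])
qed

lemma connected_graph_image:
  assumes "closed Z" "graph_box Z s s' c d" "T \<subseteq> {s..s'}" "is_interval T"
  shows "connected ((\<lambda>x. (x, graph_fun Z c d x)) ` T)"
proof (rule connected_continuous_image)
  show "continuous_on T (\<lambda>x. (x, graph_fun Z c d x))"
    using continuous_on_subset[OF continuous_on_graph_fun[OF assms(1,2)] assms(3)]
    by (intro continuous_on_Pair continuous_on_id)
  show "connected T"
    using assms(4) by (simp add: is_interval_connected)
qed

lemma graph_cell_homeomorphic:
  assumes "closed Z" "graph_box Z s s' c d" "s < s'"
  shows "Z \<inter> ({s<..<s'} \<times> {c<..<d}) homeomorphic {0<..<(1::real)}"
proof -
  let ?\<gamma> = "\<lambda>x. (x, graph_fun Z c d x)"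
  have sub: "{s<..<s'} \<subseteq> {s..s'}"
    by auto
  have "homeomorphism (?\<gamma> ` {s<..<s'}) {s<..<s'} fst ?\<gamma>"
  proof (rule homeomorphismI)
    show "continuous_on {s<..<s'} ?\<gamma>"
      using continuous_on_subset[OF continuous_on_graph_fun[OF assms(1,2)] sub]
      by (intro continuous_on_Pair continuous_on_id)
    show "continuous_on (?\<gamma> ` {s<..<s'}) fst"
      by (rule continuous_on_fst[OF continuous_on_id])
  qed (use sub in auto)
  then have "?\<gamma> ` {s<..<s'} homeomorphic {s<..<s'}"
    unfolding homeomorphic_def by blast
  then have "Z \<inter> ({s<..<s'} \<times> {c<..<d}) homeomorphic {s<..<s'}"
    unfolding graph_box_Int_eq(2)[OF assms(2) sub] .
  also have "{s<..<s'} homeomorphic (UNIV :: real set)"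
    using assms(3) by (rule homeomorphic_open_interval_UNIV)
  also have "(UNIV :: real set) homeomorphic {0<..<(1::real)}"
    using homeomorphic_open_interval_UNIV[of 0 1] homeomorphic_sym by auto
  finally show ?thesis .
qed

lemma connected_trapped_in_graph_box:
  assumes box: "graph_box Z s s' c d" and K: "connected K" "K \<subseteq> Z"
    and uv: "s \<le> u" "v \<le> s'"
    and out: "(u, graph_fun Z c d u) \<notin> K" "(v, graph_fun Z c d v) \<notin> K"
    and w: "w \<in> K" "w \<in> {u<..<v} \<times> {c<..<d}"
  shows "K \<subseteq> {u<..<v} \<times> {c<..<d}"
proof (rule connected_Int_open_closed_subset[OF K(1)])
  show "K \<inter> ({u<..<v} \<times> {c<..<d}) = K \<inter> ({u..v} \<times> {c..d})"
  proof
    show "K \<inter> ({u..v} \<times> {c..d}) \<subseteq> K \<inter> ({u<..<v} \<times> {c<..<d})"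
    proof
      fix p assume p: "p \<in> K \<inter> ({u..v} \<times> {c..d})"
      have sub: "{u..v} \<subseteq> {s..s'}"
        using uv by auto
      then obtain a where a: "a \<in> {u..v}" "p = (a, graph_fun Z c d a)"
        using graph_box_Int_eq(1)[OF box sub] p K(2) by blast
      then have "a \<noteq> u" "a \<noteq> v"
        using p out by auto
      then show "p \<in> K \<inter> ({u<..<v} \<times> {c<..<d})"
        using a p sub graph_fun_mem(1)[OF box, of a] by auto
    qed
  qed auto
  show "K \<inter> ({u<..<v} \<times> {c<..<d}) \<noteq> {}"
    using w by blast
qed (auto intro: open_Times closed_Times)

lemma connected_stays_in_graph_box:
  assumes box: "graph_box Z s s' c d" and W: "connected W" "W \<subseteq> Z \<inter> ({s..s'} \<times> UNIV)"
    and q: "q \<in> W" "snd q \<in> {c<..<d}"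
  shows "W \<subseteq> UNIV \<times> {c<..<d}"
proof (rule connected_Int_open_closed_subset[OF W(1)])
  show "W \<inter> (UNIV \<times> {c<..<d}) = W \<inter> (UNIV \<times> {c..d})"
  proof
    show "W \<inter> (UNIV \<times> {c..d}) \<subseteq> W \<inter> (UNIV \<times> {c<..<d})"
    proof
      fix p assume p: "p \<in> W \<inter> (UNIV \<times> {c..d})"
      then have "p \<in> Z" "fst p \<in> {s..s'}"
        using W(2) by auto
      then have "snd p \<in> {c<..<d}"
        using graph_box_interior[OF box, of "fst p" "snd p"] p by auto
      with p show "p \<in> W \<inter> (UNIV \<times> {c<..<d})"
        by (auto simp: mem_Times_iff)
    qed
  qed auto
  show "W \<inter> (UNIV \<times> {c<..<d}) \<noteq> {}"
    using q by (auto simp: mem_Times_iff)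
qed (auto intro: open_Times closed_Times)

lemma graph_piece_subset_component:
  assumes Z: "closed Z" "graph_box Z s s' c d"
    and W: "W \<in> components (K \<inter> (Z \<inter> ({s<..<s'} \<times> {c<..<d})))"
    and I: "I \<subseteq> {s<..<s'}" "is_interval I" "x \<in> I" "(x, graph_fun Z c d x) \<in> W"
    and sub: "(\<lambda>x. (x, graph_fun Z c d x)) ` I \<subseteq> K"
  shows "(\<lambda>x. (x, graph_fun Z c d x)) ` I \<subseteq> W"
proof (rule components_maximal[OF W])
  show "connected ((\<lambda>x. (x, graph_fun Z c d x)) ` I)"
    using I(1,2) by (intro connected_graph_image[OF Z]) auto
  have "I \<subseteq> {s..s'}"
    using I(1) by auto
  then have "(\<lambda>x. (x, graph_fun Z c d x)) ` I \<subseteq> Z \<inter> ({s<..<s'} \<times> {c<..<d})"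
    using I(1) graph_box_Int_eq(2)[OF Z(2)] by blast
  with sub show "(\<lambda>x. (x, graph_fun Z c d x)) ` I \<subseteq> K \<inter> (Z \<inter> ({s<..<s'} \<times> {c<..<d}))"
    by blast
  show "W \<inter> (\<lambda>x. (x, graph_fun Z c d x)) ` I \<noteq> {}"
    using I(3,4) by blast
qed

lemma graph_cell_component_reaches_end:
  fixes Z :: "(real \<times> real) set" and c d :: real
  defines "\<gamma> \<equiv> \<lambda>x. (x, graph_fun Z c d x)"
  assumes Z: "closed Z" "graph_box Z s s' c d" and K: "connected K" "K \<subseteq> Z"
    and not_sub: "\<not> K \<subseteq> Z \<inter> ({s<..<s'} \<times> {c<..<d})"
    and W: "W \<in> components (K \<inter> (Z \<inter> ({s<..<s'} \<times> {c<..<d})))"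
  obtains x where "x \<in> {s<..<s'}" "\<gamma> ` {s<..x} \<subseteq> W \<or> \<gamma> ` {x..<s'} \<subseteq> W"
proof -
  obtain w where w: "w \<in> W"
    using W in_components_nonempty by blast
  have w_KC: "w \<in> K \<inter> (Z \<inter> ({s<..<s'} \<times> {c<..<d}))"
    using W w in_components_subset by blast
  moreover have "Z \<inter> ({s<..<s'} \<times> {c<..<d}) = \<gamma> ` {s<..<s'}"
    unfolding \<gamma>_def by (rule graph_box_Int_eq(2)[OF Z(2)]) auto
  ultimately obtain xw where xw: "xw \<in> {s<..<s'}" "w = \<gamma> xw"
    by auto
  consider "\<gamma> ` {s<..xw} \<subseteq> K" | "\<gamma> ` {xw..<s'} \<subseteq> K"
    | u v where "u \<in> {s<..xw}" "\<gamma> u \<notin> K" "v \<in> {xw..<s'}" "\<gamma> v \<notin> K"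
    by blast
  then show thesis
  proof cases
    case 1
    then have "\<gamma> ` {s<..xw} \<subseteq> W"
      using xw w unfolding \<gamma>_def
      by (intro graph_piece_subset_component[OF Z W, of _ xw]) (auto simp: is_interval_def)
    with xw show thesis
      using that by blast
  next
    case 2
    then have "\<gamma> ` {xw..<s'} \<subseteq> W"
      using xw w unfolding \<gamma>_def
      by (intro graph_piece_subset_component[OF Z W, of _ xw]) (auto simp: is_interval_def)
    with xw show thesis
      using that by blast
  next
    case (3 u v)
    have "u \<noteq> xw" "v \<noteq> xw"
      using 3 w_KC xw by auto
    then have "K \<subseteq> {u<..<v} \<times> {c<..<d}"
      using 3 w_KC xw graph_fun_mem(1)[OF Z(2), of xw] unfolding \<gamma>_def
      by (intro connected_trapped_in_graph_box[OF Z(2) K, of u v w]) auto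
    moreover have "{u<..<v} \<times> {c<..<d} \<subseteq> {s<..<s'} \<times> {c<..<d}"
      using 3 by auto
    ultimately show thesis
      using not_sub K(2) by blast
  qed
qed

lemma finite_pairwise_intersecting_components:
  assumes "\<W> \<subseteq> components S" "\<And>W W'. W \<in> \<W> \<Longrightarrow> W' \<in> \<W> \<Longrightarrow> W \<inter> W' \<noteq> {}"
  shows "finite \<W>"
proof (cases "\<W> = {}")
  case False
  then obtain W where "W \<in> \<W>"
    by blast
  then have "\<W> \<subseteq> {W}"
    using assms components_nonoverlap by blast
  then show ?thesis
    by (rule finite_subset) simp
qed simp

lemma finite_components_containing_end_pieces:
  fixes \<gamma> :: "real \<Rightarrow> 'a::topological_space"
  shows "finite {W \<in> components A. \<exists>x\<in>{s<..<s'}. \<gamma> ` {s<..x} \<subseteq> W}"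
    and "finite {W \<in> components A. \<exists>x\<in>{s<..<s'}. \<gamma> ` {x..<s'} \<subseteq> W}"
proof -
  show "finite {W \<in> components A. \<exists>x\<in>{s<..<s'}. \<gamma> ` {s<..x} \<subseteq> W}"
  proof (rule finite_pairwise_intersecting_components)
    fix W W' assume "W \<in> {W \<in> components A. \<exists>x\<in>{s<..<s'}. \<gamma> ` {s<..x} \<subseteq> W}"
      "W' \<in> {W \<in> components A. \<exists>x\<in>{s<..<s'}. \<gamma> ` {s<..x} \<subseteq> W}"
    then obtain x x' where "x \<in> {s<..<s'}" "x' \<in> {s<..<s'}" "\<gamma> ` {s<..x} \<subseteq> W" "\<gamma> ` {s<..x'} \<subseteq> W'"
      by blast
    moreover have "(s + min x x') / 2 \<in> {s<..x} \<inter> {s<..x'}"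
      using calculation(1,2) by auto
    ultimately show "W \<inter> W' \<noteq> {}"
      by blast
  qed auto
  show "finite {W \<in> components A. \<exists>x\<in>{s<..<s'}. \<gamma> ` {x..<s'} \<subseteq> W}"
  proof (rule finite_pairwise_intersecting_components)
    fix W W' assume "W \<in> {W \<in> components A. \<exists>x\<in>{s<..<s'}. \<gamma> ` {x..<s'} \<subseteq> W}"
      "W' \<in> {W \<in> components A. \<exists>x\<in>{s<..<s'}. \<gamma> ` {x..<s'} \<subseteq> W}"
    then obtain x x' where "x \<in> {s<..<s'}" "x' \<in> {s<..<s'}" "\<gamma> ` {x..<s'} \<subseteq> W" "\<gamma> ` {x'..<s'} \<subseteq> W'"
      by blast
    moreover have "(s' + max x x') / 2 \<in> {x..<s'} \<inter> {x'..<s'}"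
      using calculation(1,2) by auto
    ultimately show "W \<inter> W' \<noteq> {}"
      by blast
  qed auto
qed

lemma finite_components_Int_graph_cell:
  assumes Z: "closed Z" "graph_box Z s s' c d" and K: "connected K" "K \<subseteq> Z"
  shows "finite (components (K \<inter> (Z \<inter> ({s<..<s'} \<times> {c<..<d}))))"
proof (cases "K \<subseteq> Z \<inter> ({s<..<s'} \<times> {c<..<d})")
  case True
  then have "K \<inter> (Z \<inter> ({s<..<s'} \<times> {c<..<d})) = K"
    by blast
  moreover have "components K \<subseteq> {K}"
    using K(1) components_eq_sing_iff[of K] by (cases "K = {}") auto
  ultimately show ?thesis
    using finite_subset by fastforce
next
  case False
  let ?\<gamma> = "\<lambda>x. (x, graph_fun Z c d x)" and ?A = "K \<inter> (Z \<inter> ({s<..<s'} \<times> {c<..<d}))"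
  have "components ?A \<subseteq> {W \<in> components ?A. \<exists>x\<in>{s<..<s'}. ?\<gamma> ` {s<..x} \<subseteq> W} \<union>
      {W \<in> components ?A. \<exists>x\<in>{s<..<s'}. ?\<gamma> ` {x..<s'} \<subseteq> W}"
  proof
    fix W assume W: "W \<in> components ?A"
    obtain x where "x \<in> {s<..<s'}" "?\<gamma> ` {s<..x} \<subseteq> W \<or> ?\<gamma> ` {x..<s'} \<subseteq> W"
      by (rule graph_cell_component_reaches_end[OF Z K False W])
    with W show "W \<in> {W \<in> components ?A. \<exists>x\<in>{s<..<s'}. ?\<gamma> ` {s<..x} \<subseteq> W} \<union>
        {W \<in> components ?A. \<exists>x\<in>{s<..<s'}. ?\<gamma> ` {x..<s'} \<subseteq> W}"
      by blast
  qed
  then show ?thesis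
    by (rule finite_subset) (intro finite_UnI finite_components_containing_end_pieces)
qed

section \<open>Dyadic strips and the cell decomposition\<close>

definition graph_strip :: "(real \<times> real) set \<Rightarrow> real \<Rightarrow> real \<Rightarrow> bool" where
  "graph_strip Z s s' \<longleftrightarrow>
     (\<forall>q\<in>Z. fst q \<in> {s<..<s'} \<longrightarrow> (\<exists>\<epsilon>>0. graph_box Z s s' (snd q - \<epsilon>) (snd q + \<epsilon>)))"

lemma graph_strip_component:
  assumes Z: "closed Z" and strip: "graph_strip Z s s'"
    and W: "W \<in> components (Z \<inter> ({s<..<s'} \<times> UNIV))"
  obtains c d where "graph_box Z s s' c d" "W = Z \<inter> ({s<..<s'} \<times> {c<..<d})"
proof -
  obtain q where q: "q \<in> W"
    using W in_components_nonempty by blast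
  have "q \<in> Z" "fst q \<in> {s<..<s'}"
    using q in_components_subset[OF W] by auto
  then obtain \<epsilon> where "\<epsilon> > 0" and box: "graph_box Z s s' (snd q - \<epsilon>) (snd q + \<epsilon>)"
    using strip unfolding graph_strip_def by blast
  define c d where "c = snd q - \<epsilon>" and "d = snd q + \<epsilon>"
  note box = box[folded c_def d_def]
  have sub: "{s<..<s'} \<subseteq> {s..s'}"
    by auto
  have q_box: "snd q \<in> {c<..<d}"
    using \<open>\<epsilon> > 0\<close> unfolding c_def d_def by simp
  have "Z \<inter> ({s<..<s'} \<times> {c<..<d}) \<subseteq> W"
  proof (rule components_maximal[OF W])
    show "connected (Z \<inter> ({s<..<s'} \<times> {c<..<d}))"
      unfolding graph_box_Int_eq(2)[OF box sub]
      by (rule connected_graph_image[OF Z box sub]) (auto simp: is_interval_def)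
    show "W \<inter> (Z \<inter> ({s<..<s'} \<times> {c<..<d})) \<noteq> {}"
      using q q_box \<open>q \<in> Z\<close> \<open>fst q \<in> {s<..<s'}\<close> by (cases q) auto
  qed auto
  moreover have "W \<subseteq> UNIV \<times> {c<..<d}"
    using in_components_subset[OF W]
    by (intro connected_stays_in_graph_box[OF box in_components_connected[OF W] _ q q_box]) auto
  then have "W \<subseteq> Z \<inter> ({s<..<s'} \<times> {c<..<d})"
    using in_components_subset[OF W] by auto
  ultimately show thesis
    using that box by blast
qed

lemma countable_components_graph_strip:
  assumes Z: "closed Z" "graph_strip Z s s'" and "s < s'"
    and slice: "countable (Z \<inter> ({(s + s') / 2} \<times> UNIV))"
  shows "countable (components (Z \<inter> ({s<..<s'} \<times> UNIV)))"
proof -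
  define m where "m = (s + s') / 2"
  let ?S = "Z \<inter> ({s<..<s'} \<times> UNIV)"
  have "components ?S \<subseteq> connected_component_set ?S ` (Z \<inter> ({m} \<times> UNIV))"
  proof
    fix W assume W: "W \<in> components ?S"
    then obtain c d where box: "graph_box Z s s' c d" and W_eq: "W = Z \<inter> ({s<..<s'} \<times> {c<..<d})"
      using graph_strip_component[OF Z] by blast
    have m: "m \<in> {s<..<s'}"
      using \<open>s < s'\<close> unfolding m_def by auto
    then have "(m, graph_fun Z c d m) \<in> W"
      using graph_fun_mem[OF box, of m] unfolding W_eq by auto
    then have "W = connected_component_set ?S (m, graph_fun Z c d m)"
      using W by (metis components_iff connected_component_eq)
    moreover have "(m, graph_fun Z c d m) \<in> Z \<inter> ({m} \<times> UNIV)"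
      using graph_fun_mem(2)[OF box, of m] m by auto
    ultimately show "W \<in> connected_component_set ?S ` (Z \<inter> ({m} \<times> UNIV))"
      by blast
  qed
  then show ?thesis
    using slice unfolding m_def by (meson countable_image countable_subset)
qed

definition dyadic_interval :: "nat \<Rightarrow> int \<Rightarrow> real set" where
  "dyadic_interval n k = {of_int k / 2 ^ n <..< (of_int k + 1) / 2 ^ n}"

lemma mem_dyadic_interval_iff:
  "x \<in> dyadic_interval n k \<longleftrightarrow> \<lfloor>x * 2 ^ n\<rfloor> = k \<and> x * 2 ^ n \<notin> \<int>"
proof -
  have "x \<in> dyadic_interval n k \<longleftrightarrow> of_int k < x * 2 ^ n \<and> x * 2 ^ n < of_int k + 1"
    unfolding dyadic_interval_def by (simp add: divide_less_eq less_divide_eq)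
  also have "\<dots> \<longleftrightarrow> \<lfloor>x * 2 ^ n\<rfloor> = k \<and> x * 2 ^ n \<notin> \<int>"
  proof
    assume x: "of_int k < x * 2 ^ n \<and> x * 2 ^ n < of_int k + 1"
    then have "x * 2 ^ n \<notin> \<int>"
      by (auto elim!: Ints_cases)
    with x show "\<lfloor>x * 2 ^ n\<rfloor> = k \<and> x * 2 ^ n \<notin> \<int>"
      by (simp add: floor_eq_iff)
  next
    assume x: "\<lfloor>x * 2 ^ n\<rfloor> = k \<and> x * 2 ^ n \<notin> \<int>"
    then have "x * 2 ^ n \<noteq> of_int k"
      by (metis Ints_of_int)
    with x show "of_int k < x * 2 ^ n \<and> x * 2 ^ n < of_int k + 1"
      by (auto simp: floor_eq_iff)
  qed
  finally show ?thesis .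
qed

lemma floor_mult_power2_div:
  fixes t :: real
  assumes "n \<le> n'"
  shows "\<lfloor>t * 2 ^ n\<rfloor> = \<lfloor>t * 2 ^ n'\<rfloor> div 2 ^ (n' - n)"
proof -
  have "(2::real) ^ n' = 2 ^ n * 2 ^ (n' - n)"
    using assms by (simp flip: power_add)
  then have "t * 2 ^ n' / real_of_int (2 ^ (n' - n)) = t * 2 ^ n"
    by simp
  moreover have "\<lfloor>t * 2 ^ n' / real_of_int (2 ^ (n' - n))\<rfloor> = \<lfloor>t * 2 ^ n'\<rfloor> div 2 ^ (n' - n)"
    by (rule floor_divide_real_eq_div) simp
  ultimately show ?thesis
    by simp
qed

lemma dyadic_interval_nested:
  assumes "n \<le> n'" "z \<in> dyadic_interval n k" "z \<in> dyadic_interval n' k'"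
  shows "dyadic_interval n' k' \<subseteq> dyadic_interval n k"
proof
  fix y assume y: "y \<in> dyadic_interval n' k'"
  have "\<lfloor>y * 2 ^ n\<rfloor> = \<lfloor>z * 2 ^ n\<rfloor>"
    using y assms by (simp add: floor_mult_power2_div mem_dyadic_interval_iff)
  moreover have "y * 2 ^ n \<notin> \<int>"
  proof
    assume "y * 2 ^ n \<in> \<int>"
    then have "y * 2 ^ n * 2 ^ (n' - n) \<in> \<int>"
      by (rule Ints_mult) (intro Ints_power Ints_numeral)
    then show False
      using y assms(1) by (simp add: mem_dyadic_interval_iff mult.assoc flip: power_add)
  qed
  ultimately show "y \<in> dyadic_interval n k"
    using assms(2) by (simp add: mem_dyadic_interval_iff)
qed

definition dyadics :: "real set" where
  "dyadics = (\<lambda>(n, k). of_int k / 2 ^ n) ` (UNIV :: (nat \<times> int) set)"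

lemma countable_dyadics: "countable dyadics"
  unfolding dyadics_def by simp

lemma nondyadic_mem_dyadic_interval:
  assumes "x \<notin> dyadics"
  shows "x \<in> dyadic_interval n \<lfloor>x * 2 ^ n\<rfloor>"
proof -
  have "x * 2 ^ n \<notin> \<int>"
  proof
    assume "x * 2 ^ n \<in> \<int>"
    then obtain k where "x * 2 ^ n = of_int k"
      by (elim Ints_cases)
    then have "x = of_int k / 2 ^ n"
      by (simp add: eq_divide_eq)
    then show False
      using assms unfolding dyadics_def by auto
  qed
  then show ?thesis
    by (simp add: mem_dyadic_interval_iff)
qed

definition dyadic_graph_strip :: "(real \<times> real) set \<Rightarrow> nat \<Rightarrow> int \<Rightarrow> bool" where
  "dyadic_graph_strip Z n k \<longleftrightarrow> graph_strip Z (of_int k / 2 ^ n) ((of_int k + 1) / 2 ^ n)"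

definition maximal_graph_dyadics :: "(real \<times> real) set \<Rightarrow> (nat \<times> int) set" where
  "maximal_graph_dyadics Z = {(n, k). dyadic_graph_strip Z n k \<and>
     (\<forall>m<n. \<forall>j. dyadic_interval n k \<subseteq> dyadic_interval m j \<longrightarrow> \<not> dyadic_graph_strip Z m j)}"

lemma maximal_graph_dyadics_unique:
  assumes "(n, k) \<in> maximal_graph_dyadics Z" "(n', k') \<in> maximal_graph_dyadics Z"
    and "z \<in> dyadic_interval n k" "z \<in> dyadic_interval n' k'"
  shows "(n, k) = (n', k')"
proof -
  have ordered: "(n, k) = (n', k')"
    if max: "(n, k) \<in> maximal_graph_dyadics Z" "(n', k') \<in> maximal_graph_dyadics Z"
      and z: "z \<in> dyadic_interval n k" "z \<in> dyadic_interval n' k'" and "n \<le> n'"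
    for n k n' k'
  proof -
    have "dyadic_interval n' k' \<subseteq> dyadic_interval n k"
      using dyadic_interval_nested[OF \<open>n \<le> n'\<close> z] .
    moreover have "dyadic_graph_strip Z n k"
      using max(1) by (simp add: maximal_graph_dyadics_def)
    moreover have "\<forall>m<n'. \<forall>j. dyadic_interval n' k' \<subseteq> dyadic_interval m j \<longrightarrow> \<not> dyadic_graph_strip Z m j"
      using max(2) by (simp add: maximal_graph_dyadics_def)
    ultimately have "\<not> n < n'"
      by blast
    then have "n = n'"
      using \<open>n \<le> n'\<close> by simp
    moreover have "k = k'"
      using z unfolding \<open>n = n'\<close> mem_dyadic_interval_iff by simp
    ultimately show ?thesis
      by simp
  qed
  show ?thesis
    using ordered[OF assms] ordered[OF assms(2,1,4,3)] by (cases "n \<le> n'") auto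
qed

definition locally_graph :: "(real \<times> real) set \<Rightarrow> real \<Rightarrow> bool" where
  "locally_graph Z x \<longleftrightarrow> (\<exists>\<delta>>0. \<forall>s s'. x - \<delta> < s \<longrightarrow> s' < x + \<delta> \<longrightarrow> graph_strip Z s s')"

lemma maximal_graph_dyadic_cover:
  assumes "x \<notin> dyadics" "locally_graph Z x"
  obtains n k where "(n, k) \<in> maximal_graph_dyadics Z" "x \<in> dyadic_interval n k"
proof -
  obtain \<delta> where "\<delta> > 0" and \<delta>: "\<And>s s'. x - \<delta> < s \<Longrightarrow> s' < x + \<delta> \<Longrightarrow> graph_strip Z s s'"
    using assms(2) unfolding locally_graph_def by blast
  obtain n0 where n0: "(1 / 2) ^ n0 < \<delta>"
    using real_arch_pow_inv[OF \<open>\<delta> > 0\<close>, of "1 / 2"] by auto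
  define P where "P n \<longleftrightarrow> dyadic_graph_strip Z n \<lfloor>x * 2 ^ n\<rfloor>" for n
  have "P n0"
  proof -
    define k where "k = \<lfloor>x * 2 ^ n0\<rfloor>"
    have "x \<in> dyadic_interval n0 k"
      unfolding k_def using assms(1) by (rule nondyadic_mem_dyadic_interval)
    moreover have "(of_int k + 1) / 2 ^ n0 - of_int k / 2 ^ n0 = ((1 / 2) ^ n0 :: real)"
      by (simp add: power_one_over flip: diff_divide_distrib)
    ultimately show ?thesis
      unfolding P_def dyadic_graph_strip_def k_def[symmetric] dyadic_interval_def
      using n0 by (intro \<delta>) auto
  qed
  define n where "n = (LEAST n. P n)"
  have "(n, \<lfloor>x * 2 ^ n\<rfloor>) \<in> maximal_graph_dyadics Z"
    unfolding maximal_graph_dyadics_def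
  proof (intro CollectI case_prodI conjI allI impI)
    show "dyadic_graph_strip Z n \<lfloor>x * 2 ^ n\<rfloor>"
      using LeastI[of P, OF \<open>P n0\<close>] unfolding n_def P_def .
  next
    fix m j assume m: "m < n" and sub: "dyadic_interval n \<lfloor>x * 2 ^ n\<rfloor> \<subseteq> dyadic_interval m j"
    have "x \<in> dyadic_interval m j"
      using sub nondyadic_mem_dyadic_interval[OF assms(1)] by blast
    then have "j = \<lfloor>x * 2 ^ m\<rfloor>"
      by (simp add: mem_dyadic_interval_iff)
    then show "\<not> dyadic_graph_strip Z m j"
      using not_less_Least[OF m[unfolded n_def]] unfolding P_def by simp
  qed
  then show thesis
    using that nondyadic_mem_dyadic_interval[OF assms(1)] by blast
qed

definition dyadic_strips :: "(real \<times> real) set \<Rightarrow> (real \<times> real) set set" where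
  "dyadic_strips Z = (\<lambda>(n, k). Z \<inter> (dyadic_interval n k \<times> UNIV)) ` maximal_graph_dyadics Z"

definition dyadic_cells :: "(real \<times> real) set \<Rightarrow> (real \<times> real) set set" where
  "dyadic_cells Z = (\<Union>S\<in>dyadic_strips Z. components S) \<union> (\<lambda>p. {p}) ` (Z - \<Union>(dyadic_strips Z))"

lemma dyadic_strips_disjoint:
  assumes "S \<in> dyadic_strips Z" "S' \<in> dyadic_strips Z" "p \<in> S" "p \<in> S'"
  shows "S = S'"
proof -
  obtain n k n' k' where nk: "(n, k) \<in> maximal_graph_dyadics Z" "(n', k') \<in> maximal_graph_dyadics Z"
    and S: "S = Z \<inter> (dyadic_interval n k \<times> UNIV)" "S' = Z \<inter> (dyadic_interval n' k' \<times> UNIV)"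
    using assms(1,2) unfolding dyadic_strips_def by auto
  have "fst p \<in> dyadic_interval n k" "fst p \<in> dyadic_interval n' k'"
    using assms(3,4) S by auto
  then have "(n, k) = (n', k')"
    by (rule maximal_graph_dyadics_unique[OF nk])
  with S show ?thesis
    by simp
qed

lemma dyadic_strip_cases:
  assumes "S \<in> dyadic_strips Z"
  obtains s s' where "s < s'" "graph_strip Z s s'" "S = Z \<inter> ({s<..<s'} \<times> UNIV)"
proof -
  obtain n k where "(n, k) \<in> maximal_graph_dyadics Z" and S: "S = Z \<inter> (dyadic_interval n k \<times> UNIV)"
    using assms unfolding dyadic_strips_def by auto
  then have "graph_strip Z (of_int k / 2 ^ n) ((of_int k + 1) / 2 ^ n)"
    unfolding maximal_graph_dyadics_def dyadic_graph_strip_def by simp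
  moreover have "of_int k / 2 ^ n < (of_int k + 1) / (2 ^ n :: real)"
    by (simp add: divide_strict_right_mono)
  ultimately show thesis
    using that S unfolding dyadic_interval_def by blast
qed

lemma dyadic_strip_component:
  assumes "closed Z" "S \<in> dyadic_strips Z" "W \<in> components S"
  obtains s s' c d where "s < s'" "graph_box Z s s' c d" "W = Z \<inter> ({s<..<s'} \<times> {c<..<d})"
proof -
  obtain s s' where "s < s'" "graph_strip Z s s'" "S = Z \<inter> ({s<..<s'} \<times> UNIV)"
    using assms(2) by (rule dyadic_strip_cases)
  then show thesis
    using graph_strip_component[OF assms(1)] assms(3) that by metis
qed

lemma dyadic_cell_cases [consumes 2]:
  assumes "closed Z" "e \<in> dyadic_cells Z"
  obtains (point) p where "e = {p}"
    | (arc) s s' c d where "s < s'" "graph_box Z s s' c d" "e = Z \<inter> ({s<..<s'} \<times> {c<..<d})"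
proof -
  consider S where "S \<in> dyadic_strips Z" "e \<in> components S" | p where "e = {p}"
    using assms(2) unfolding dyadic_cells_def by blast
  then show thesis
  proof cases
    case 1
    then show thesis
      using dyadic_strip_component[OF assms(1)] arc by metis
  next
    case 2
    then show thesis
      by (rule point)
  qed
qed

lemma dyadic_strip_component_disjoint:
  assumes "S \<in> dyadic_strips Z" "C \<in> components S" "D \<in> dyadic_cells Z" "C \<noteq> D"
  shows "C \<inter> D = {}"
proof (cases "D \<in> (\<lambda>p. {p}) ` (Z - \<Union>(dyadic_strips Z))")
  case True
  then show ?thesis
    using assms(1,2) in_components_subset by blast
next
  case False
  then obtain S' where S': "S' \<in> dyadic_strips Z" "D \<in> components S'"
    using assms(3) unfolding dyadic_cells_def by blast
  show ?thesis
  proof (cases "S = S'")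
    case True
    then show ?thesis
      using components_nonoverlap assms(2,4) S'(2) by blast
  next
    case False
    then have "S \<inter> S' = {}"
      using dyadic_strips_disjoint[OF assms(1) S'(1)] by blast
    then show ?thesis
      using in_components_subset assms(2) S'(2) by blast
  qed
qed

lemma dyadic_cells_partition:
  shows "\<Union>(dyadic_cells Z) = Z" and "{} \<notin> dyadic_cells Z"
    and "C \<in> dyadic_cells Z \<Longrightarrow> D \<in> dyadic_cells Z \<Longrightarrow> C \<noteq> D \<Longrightarrow> C \<inter> D = {}"
proof -
  have "\<Union>(\<Union>S\<in>dyadic_strips Z. components S) = \<Union>(dyadic_strips Z)"
    using Union_components by blast
  moreover have "\<Union>(dyadic_strips Z) \<subseteq> Z"
    unfolding dyadic_strips_def by auto
  ultimately show "\<Union>(dyadic_cells Z) = Z"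
    unfolding dyadic_cells_def by blast
  show "{} \<notin> dyadic_cells Z"
    unfolding dyadic_cells_def using in_components_nonempty by blast
  assume C: "C \<in> dyadic_cells Z" and D: "D \<in> dyadic_cells Z" and "C \<noteq> D"
  consider S where "S \<in> dyadic_strips Z" "C \<in> components S"
    | S where "S \<in> dyadic_strips Z" "D \<in> components S"
    | "C \<in> (\<lambda>p. {p}) ` Z" "D \<in> (\<lambda>p. {p}) ` Z"
    using C D unfolding dyadic_cells_def by blast
  then show "C \<inter> D = {}"
  proof cases
    case 1
    then show ?thesis
      using dyadic_strip_component_disjoint D \<open>C \<noteq> D\<close> by blast
  next
    case 2
    then show ?thesis
      using dyadic_strip_component_disjoint[of S Z D C] C \<open>C \<noteq> D\<close> by blast
  next
    case 3
    then show ?thesis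
      using \<open>C \<noteq> D\<close> by blast
  qed
qed

lemma countable_dyadic_cells:
  assumes "closed Z" and slices: "\<And>x. countable (Z \<inter> ({x} \<times> UNIV))"
    and "countable E" and regular: "\<And>x. x \<notin> E \<Longrightarrow> locally_graph Z x"
  shows "countable (dyadic_cells Z)"
proof -
  have "countable (dyadic_strips Z)"
    unfolding dyadic_strips_def by (intro countable_image countableI_type)
  moreover have "countable (components S)" if S: "S \<in> dyadic_strips Z" for S
  proof -
    obtain s s' where "s < s'" "graph_strip Z s s'" "S = Z \<inter> ({s<..<s'} \<times> UNIV)"
      using S by (rule dyadic_strip_cases)
    then show ?thesis
      using countable_components_graph_strip[OF assms(1)] slices by blast
  qed
  ultimately have "countable (\<Union>S\<in>dyadic_strips Z. components S)"
    by (rule countable_UN)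
  moreover have "Z - \<Union>(dyadic_strips Z) \<subseteq> (\<Union>x\<in>E \<union> dyadics. Z \<inter> ({x} \<times> UNIV))"
  proof
    fix p assume p: "p \<in> Z - \<Union>(dyadic_strips Z)"
    have "fst p \<in> E \<union> dyadics"
    proof (rule ccontr)
      assume "fst p \<notin> E \<union> dyadics"
      then obtain n k where "(n, k) \<in> maximal_graph_dyadics Z" "fst p \<in> dyadic_interval n k"
        using maximal_graph_dyadic_cover regular by blast
      then have "p \<in> \<Union>(dyadic_strips Z)"
        using p unfolding dyadic_strips_def by (force simp: mem_Times_iff)
      with p show False
        by blast
    qed
    with p show "p \<in> (\<Union>x\<in>E \<union> dyadics. Z \<inter> ({x} \<times> UNIV))"
      by (auto simp: mem_Times_iff)
  qed
  then have "countable (Z - \<Union>(dyadic_strips Z))"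
    using countable_subset \<open>countable E\<close> countable_dyadics slices
    by (metis countable_UN countable_Un)
  ultimately show ?thesis
    unfolding dyadic_cells_def by simp
qed

lemma cell_decomposition_dyadic_cells:
  assumes "closed Z" "Z \<in> semialgebraic" "\<And>x. countable (Z \<inter> ({x} \<times> UNIV))"
    and "countable E" "\<And>x. x \<notin> E \<Longrightarrow> locally_graph Z x"
  shows "cell_decomposition (dyadic_cells Z) Z"
  unfolding cell_decomposition_def
proof (intro conjI)
  show "countable (dyadic_cells Z)"
    using countable_dyadic_cells assms(1,3-5) by blast
  show "\<Union>(dyadic_cells Z) = Z" "{} \<notin> dyadic_cells Z"
    by (fact dyadic_cells_partition)+
  show "\<forall>C\<in>dyadic_cells Z. \<forall>D\<in>dyadic_cells Z. C \<noteq> D \<longrightarrow> C \<inter> D = {}"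
    using dyadic_cells_partition(3) by blast
  show "\<forall>C\<in>dyadic_cells Z. C \<in> semialgebraic \<and> (is_0cell C \<or> is_1cell C \<or> is_2cell C)"
  proof
    fix C assume "C \<in> dyadic_cells Z"
    with assms(1) show "C \<in> semialgebraic \<and> (is_0cell C \<or> is_1cell C \<or> is_2cell C)"
    proof (cases rule: dyadic_cell_cases)
      case (point p)
      then show ?thesis
        by (simp add: semialgebraic_singleton is_0cell_def)
    next
      case (arc s s' c d)
      then show ?thesis
        using semialgebraic_Int_open_box[OF assms(2)] graph_cell_homeomorphic[OF assms(1)]
        unfolding is_1cell_def by blast
    qed
  qed
qed

lemma connected_Int_dyadic_cell:
  assumes "closed Z" "connected K" "K \<subseteq> Z" "e \<in> dyadic_cells Z"
  shows "finite (components (K \<inter> e))"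
    and "\<And>S. S \<in> components (K \<inter> e) \<Longrightarrow> (\<exists>a. S = {a}) \<or> geodesic_segment (dyadic_cells Z) S"
proof -
  have "finite (components (K \<inter> e)) \<and>
      (\<forall>S\<in>components (K \<inter> e). (\<exists>a. S = {a}) \<or> geodesic_segment (dyadic_cells Z) S)"
    using assms(1,4)
  proof (cases rule: dyadic_cell_cases)
    case (point p)
    have "components (K \<inter> e) \<subseteq> {{p}}"
    proof
      fix S assume "S \<in> components (K \<inter> e)"
      then have "S \<subseteq> {p}" "S \<noteq> {}"
        using in_components_subset in_components_nonempty point by blast+
      then show "S \<in> {{p}}"
        by blast
    qed
    then show ?thesis
      using finite_subset by blast
  next
    case (arc s s' c d)
    have "is_1cell e"
      unfolding is_1cell_def arc(3) using graph_cell_homeomorphic[OF assms(1) arc(2,1)] .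
    have "(\<exists>a. S = {a}) \<or> geodesic_segment (dyadic_cells Z) S"
      if S: "S \<in> components (K \<inter> e)" for S
    proof (cases "\<exists>a b. a \<in> S \<and> b \<in> S \<and> a \<noteq> b")
      case True
      moreover have "connected S" "S \<subseteq> e"
        using in_components_connected[OF S] in_components_subset[OF S] by auto
      ultimately show ?thesis
        unfolding geodesic_segment_def using \<open>is_1cell e\<close> assms(4) by blast
    next
      case False
      then show ?thesis
        using in_components_nonempty[OF S] by blast
    qed
    then show ?thesis
      using finite_components_Int_graph_cell[OF assms(1) arc(2) assms(2,3)] arc(3) by simp
  qed
  then show "finite (components (K \<inter> e))"
    and "\<And>S. S \<in> components (K \<inter> e) \<Longrightarrow> (\<exists>a. S = {a}) \<or> geodesic_segment (dyadic_cells Z) S"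
    by blast+
qed

lemma finiteness_property_dyadic_cells:
  assumes "closed Z"
  shows "finiteness_property (dyadic_cells Z) Z"
  unfolding finiteness_property_def
proof (intro ballI allI impI)
  fix A B g e assume "shortest_curve Z A B g" "e \<in> dyadic_cells Z"
  moreover from this have "connected (path_image g)" "path_image g \<subseteq> Z"
    unfolding shortest_curve_def curve_in_def piecewise_C2_curve_def
    by (auto simp: path_def)
  ultimately show "path_image g \<inter> e = {} \<or> finite (components (path_image g \<inter> e)) \<and>
      (\<forall>S\<in>components (path_image g \<inter> e). (\<exists>a. S = {a}) \<or> geodesic_segment (dyadic_cells Z) S)"
    using connected_Int_dyadic_cell[OF assms] by blast
qed

section \<open>Plane algebraic curves\<close>

lemma min_degree_combination_pseudo_dvd:
  fixes f g :: "'a::idom poly"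
  assumes m: "m = u * f + v * g" "m \<noteq> 0"
    and min: "\<And>u' v'. u' * f + v' * g \<noteq> 0 \<Longrightarrow> degree m \<le> degree (u' * f + v' * g)"
  obtains a where "a \<noteq> 0" "m dvd smult a (s * f + t * g)"
proof -
  define r where "r = pseudo_mod (s * f + t * g) m"
  obtain a q where a: "a \<noteq> 0" "smult a (s * f + t * g) = m * q + r"
    using pseudo_mod(1)[OF m(2), of "s * f + t * g", folded r_def] by blast
  have r: "r = (smult a s - q * u) * f + (smult a t - q * v) * g"
    using a(2) m(1) by (simp add: algebra_simps smult_add_right)
  \<comment> \<open>A nonzero pseudo-remainder would be a combination of smaller degree than m.\<close>
  have "r = 0"
  proof (rule ccontr)
    assume "r \<noteq> 0"
    then have "degree m \<le> degree r"
      unfolding r by (rule min)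
    with pseudo_mod(2)[OF m(2), of "s * f + t * g", folded r_def] \<open>r \<noteq> 0\<close> show False
      by simp
  qed
  with a have "m dvd smult a (s * f + t * g)"
    by (intro dvdI[of _ _ q]) simp
  with a(1) show thesis
    by (rule that)
qed

lemma pseudo_divisor_combination:
  fixes f g :: "'a::idom poly"
  assumes "f \<noteq> 0"
  obtains m u v a b where "m = u * f + v * g" "m \<noteq> 0" "a \<noteq> 0" "b \<noteq> 0"
    "m dvd smult a f" "m dvd smult b g"
proof -
  define S where "S = {m. m \<noteq> 0 \<and> (\<exists>u v. m = u * f + v * g)}"
  have "f = 1 * f + 0 * g"
    by simp
  with assms have "f \<in> S"
    unfolding S_def by blast
  then obtain m where "m \<in> S" and min: "\<And>m'. m' \<in> S \<Longrightarrow> degree m \<le> degree m'"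
    using ex_has_least_nat[of "\<lambda>m. m \<in> S" f degree] by blast
  then obtain u v where m: "m = u * f + v * g" "m \<noteq> 0"
    unfolding S_def by blast
  have min': "degree m \<le> degree (u' * f + v' * g)" if "u' * f + v' * g \<noteq> 0" for u' v'
    using that by (intro min) (auto simp: S_def)
  obtain a where "a \<noteq> 0" "m dvd smult a (1 * f + 0 * g)"
    by (rule min_degree_combination_pseudo_dvd[OF m min'])
  moreover obtain b where "b \<noteq> 0" "m dvd smult b (0 * f + 1 * g)"
    by (rule min_degree_combination_pseudo_dvd[OF m min'])
  ultimately show thesis
    using that[OF m] by simp
qed

lemma irreducible_pderiv_combination:
  fixes f :: "'a::{field_char_0,field_gcd} poly poly"
  assumes irr: "irreducible f" and deg: "degree f \<noteq> 0"
  obtains D u v where "D \<noteq> 0" "[:D:] = u * f + v * pderiv f"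
proof -
  have "f \<noteq> 0"
    using deg by auto
  then obtain m u v a b where m: "m = u * f + v * pderiv f" "m \<noteq> 0"
    and ab: "a \<noteq> 0" "b \<noteq> 0" "m dvd smult a f" "m dvd smult b (pderiv f)"
    by (rule pseudo_divisor_combination)
  have "degree m = 0"
  proof (rule ccontr)
    assume deg_m: "degree m \<noteq> 0"
    obtain q where q: "smult a f = m * q"
      using ab(3) by (elim dvdE)
    have "q \<noteq> 0"
      using q ab(1) \<open>f \<noteq> 0\<close> by auto
    have "prime_elem f"
      using irr by (simp add: prime_elem_iff_irreducible)
    moreover have "\<not> f dvd q"
    proof
      assume "f dvd q"
      then have "degree f \<le> degree q"
        using \<open>q \<noteq> 0\<close> by (rule dvd_imp_degree_le)
      moreover have "degree f = degree m + degree q"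
        using arg_cong[OF q, of degree] ab(1) m(2) \<open>q \<noteq> 0\<close> by (simp add: degree_mult_eq)
      ultimately show False
        using deg_m by simp
    qed
    moreover have "f dvd m * q"
      unfolding q[symmetric] by (rule dvd_smult) (rule dvd_refl)
    ultimately have "f dvd m"
      by (simp add: prime_elem_dvd_mult_iff)
    then have "f dvd smult b (pderiv f)"
      using ab(4) by (rule dvd_trans)
    moreover have "smult b (pderiv f) \<noteq> 0"
      using deg ab(2) by (simp add: pderiv_eq_0_iff)
    ultimately have "degree f \<le> degree (smult b (pderiv f))"
      by (rule dvd_imp_degree_le)
    then show False
      using deg ab(2) by (simp add: degree_pderiv)
  qed
  then obtain D where "m = [:D:]"
    by (elim degree_eq_zeroE)
  then show thesis
    using that[of D u v] m by simp
qed

lemma eval2_add: "eval2 (g + h) p = eval2 g p + eval2 h p"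
  by (simp add: eval2_def)

lemma eval2_mult: "eval2 (g * h) p = eval2 g p * eval2 h p"
  by (simp add: eval2_def)

lemma eval2_minus: "eval2 (- g) p = - eval2 g p"
  by (simp add: eval2_def)

lemma eval2_pCons: "eval2 (pCons a g) (x, y) = poly a x + y * eval2 g (x, y)"
  by (simp add: eval2_def)

lemma zero_set_minus: "zero_set (- f) = zero_set f"
  by (simp add: zero_set_def eval2_minus)

definition slice_poly :: "real \<Rightarrow> real poly poly \<Rightarrow> real poly" where
  "slice_poly x g = map_poly (\<lambda>c. poly c x) g"

lemma slice_poly_pCons: "slice_poly x (pCons a g) = pCons (poly a x) (slice_poly x g)"
  unfolding slice_poly_def by (simp add: map_poly_pCons)

lemma eval2_slice_poly: "eval2 g (x, y) = poly (slice_poly x g) y"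
  by (induction g) (simp_all add: eval2_pCons slice_poly_pCons, simp add: eval2_def slice_poly_def)

lemma eval2_pderiv: "eval2 (pderiv g) (x, y) = poly (pderiv (slice_poly x g)) y"
proof (induction g)
  case 0
  then show ?case
    by (simp add: eval2_def slice_poly_def)
next
  case (pCons a g)
  have "eval2 (pderiv (pCons a g)) (x, y) = eval2 g (x, y) + y * eval2 (pderiv g) (x, y)"
    by (simp only: pderiv_pCons eval2_add eval2_pCons) simp
  also have "\<dots> = poly (pderiv (slice_poly x (pCons a g))) y"
    using pCons(2) by (simp add: eval2_slice_poly slice_poly_pCons pderiv_pCons)
  finally show ?case .
qed

lemma eval2_MVT:
  assumes "a < b"
  obtains z where "a < z" "z < b" "eval2 g (x, b) - eval2 g (x, a) = (b - a) * eval2 (pderiv g) (x, z)"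
proof -
  obtain z where "a < z" "z < b"
    "poly (slice_poly x g) b - poly (slice_poly x g) a = (b - a) * poly (pderiv (slice_poly x g)) z"
    using poly_MVT[OF assms] by blast
  then show thesis
    using that unfolding eval2_pderiv[symmetric] eval2_slice_poly[symmetric] by blast
qed

lemma continuous_on_eval2_UNIV: "continuous_on UNIV (eval2 g)"
proof (induction g)
  case 0
  then show ?case
    by (simp add: eval2_def)
next
  case (pCons a g)
  have "eval2 (pCons a g) = (\<lambda>p. poly a (fst p) + snd p * eval2 g p)"
    by (auto simp: eval2_pCons)
  then show ?case
    using pCons by (auto intro!: continuous_intros)
qed

lemma continuous_on_eval2 [continuous_intros]:
  "continuous_on S h \<Longrightarrow> continuous_on S (\<lambda>x. eval2 g (h x))"
  using continuous_on_compose2[OF continuous_on_eval2_UNIV] by blast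

lemma closed_zero_set: "closed (zero_set f)"
  unfolding zero_set_def by (rule closed_Collect_eq[OF continuous_on_eval2_UNIV continuous_on_const])

definition critical_abscissae :: "real poly poly \<Rightarrow> real set" where
  "critical_abscissae f = {x. \<exists>y. eval2 f (x, y) = 0 \<and> eval2 (pderiv f) (x, y) = 0}"

lemma no_vertical_line:
  assumes "compact (zero_set f)"
  shows "\<not> {x} \<times> UNIV \<subseteq> zero_set f"
proof
  assume line: "{x} \<times> UNIV \<subseteq> zero_set f"
  obtain R where R: "\<And>p. p \<in> zero_set f \<Longrightarrow> norm p \<le> R"
    using compact_imp_bounded[OF assms] unfolding bounded_iff by blast
  have "norm (R + 1) \<le> norm (x, R + 1)"
    by (rule norm_snd_le)
  also have "\<dots> \<le> R"
    using line R by blast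
  finally show False
    by simp
qed

lemma finite_zero_set_slice:
  assumes "compact (zero_set f)"
  shows "finite (zero_set f \<inter> ({x} \<times> UNIV))"
proof -
  have "slice_poly x f \<noteq> 0"
  proof
    assume "slice_poly x f = 0"
    then have "{x} \<times> UNIV \<subseteq> zero_set f"
      by (auto simp: zero_set_def eval2_slice_poly)
    with no_vertical_line[OF assms] show False ..
  qed
  then have "finite {y. poly (slice_poly x f) y = 0}"
    by (rule poly_roots_finite)
  moreover have "zero_set f \<inter> ({x} \<times> UNIV) = Pair x ` {y. poly (slice_poly x f) y = 0}"
    by (auto simp: zero_set_def eval2_slice_poly)
  ultimately show ?thesis
    by simp
qed

lemma finite_critical_xs:
  assumes "irreducible f" "compact (zero_set f)"
  shows "finite (critical_abscissae f)"
proof (cases "degree f = 0")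
  case True
  then obtain a where f: "f = [:a:]"
    by (metis degree_eq_zeroE)
  have "critical_abscissae f = {}"
  proof (rule ccontr)
    assume "critical_abscissae f \<noteq> {}"
    then obtain x y where "eval2 f (x, y) = 0"
      unfolding critical_abscissae_def by blast
    then have "{x} \<times> UNIV \<subseteq> zero_set f"
      by (auto simp: zero_set_def eval2_def f)
    with no_vertical_line[OF assms(2)] show False ..
  qed
  then show ?thesis
    by simp
next
  case False
  obtain D u v where "D \<noteq> 0" and D: "[:D:] = u * f + v * pderiv f"
    using assms(1) False by (rule irreducible_pderiv_combination)
  have "critical_abscissae f \<subseteq> {x. poly D x = 0}"
  proof
    fix x assume "x \<in> critical_abscissae f"
    then obtain y where "eval2 f (x, y) = 0" "eval2 (pderiv f) (x, y) = 0"
      unfolding critical_abscissae_def by blast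
    then have "eval2 (u * f + v * pderiv f) (x, y) = 0"
      by (simp add: eval2_add eval2_mult)
    then show "x \<in> {x. poly D x = 0}"
      by (simp add: eval2_def flip: D)
  qed
  then show ?thesis
    by (rule finite_subset) (rule poly_roots_finite[OF \<open>D \<noteq> 0\<close>])
qed

lemma eval2_increment_ge:
  assumes "a \<le> b" "\<And>y. y \<in> {a..b} \<Longrightarrow> \<mu> \<le> eval2 (pderiv f) (x, y)"
  shows "(b - a) * \<mu> \<le> eval2 f (x, b) - eval2 f (x, a)"
proof (cases "a = b")
  case False
  with assms(1) have "a < b"
    by simp
  then obtain z where "a < z" "z < b"
    and z: "eval2 f (x, b) - eval2 f (x, a) = (b - a) * eval2 (pderiv f) (x, z)"
    by (rule eval2_MVT)
  then have "\<mu> \<le> eval2 (pderiv f) (x, z)"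
    using assms(2) by simp
  with \<open>a < b\<close> show ?thesis
    unfolding z by (simp add: mult_left_mono)
qed simp

lemma graph_box_of_pderiv_ge:
  assumes root: "eval2 f (x0, y0) = 0" and "0 < \<epsilon>" "0 < \<mu>"
    and deriv: "\<And>x y. x \<in> {x0 - \<delta>..x0 + \<delta>} \<Longrightarrow> y \<in> {y0 - \<epsilon>..y0 + \<epsilon>} \<Longrightarrow>
      \<mu> \<le> eval2 (pderiv f) (x, y)"
    and close: "\<And>x y. x \<in> {x0 - \<delta>..x0 + \<delta>} \<Longrightarrow> y \<in> {y0 - \<epsilon>, y0 + \<epsilon>} \<Longrightarrow>
      \<bar>eval2 f (x, y) - eval2 f (x0, y)\<bar> < \<epsilon> * \<mu>"
  shows "graph_box (zero_set f) (x0 - \<delta>) (x0 + \<delta>) (y0 - \<epsilon>) (y0 + \<epsilon>)"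
  unfolding zero_set_def
proof (rule graph_box_of_increasing_sign_change)
  show "y0 - \<epsilon> < y0 + \<epsilon>"
    using \<open>0 < \<epsilon>\<close> by simp
  fix x assume x: "x \<in> {x0 - \<delta>..x0 + \<delta>}"
  show "continuous_on {y0 - \<epsilon>..y0 + \<epsilon>} (\<lambda>y. eval2 f (x, y))"
    by (intro continuous_on_eval2 continuous_on_Pair continuous_on_const continuous_on_id)
  show "eval2 f (x, y1) < eval2 f (x, y2)" if "y0 - \<epsilon> \<le> y1" "y1 < y2" "y2 \<le> y0 + \<epsilon>" for y1 y2
  proof -
    have "(y2 - y1) * \<mu> \<le> eval2 f (x, y2) - eval2 f (x, y1)"
      using x that by (intro eval2_increment_ge deriv) auto
    moreover have "0 < (y2 - y1) * \<mu>"
      using that \<open>0 < \<mu>\<close> by simp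
    ultimately show ?thesis
      by simp
  qed
  have "x0 \<in> {x0 - \<delta>..x0 + \<delta>}"
    using x by simp
  then have "\<epsilon> * \<mu> \<le> eval2 f (x0, y0 + \<epsilon>)" "\<epsilon> * \<mu> \<le> - eval2 f (x0, y0 - \<epsilon>)"
    using eval2_increment_ge[of y0 "y0 + \<epsilon>" \<mu> f x0] eval2_increment_ge[of "y0 - \<epsilon>" y0 \<mu> f x0]
      \<open>0 < \<epsilon>\<close> deriv root by auto
  with close[OF x, of "y0 - \<epsilon>"] close[OF x, of "y0 + \<epsilon>"]
  show "eval2 f (x, y0 - \<epsilon>) < 0 \<and> 0 < eval2 f (x, y0 + \<epsilon>)"
    by (auto simp: abs_less_iff)
qed

lemma connected_abs_ge_sign_cases:
  fixes g :: "'a::topological_space \<Rightarrow> real"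
  assumes "connected S" "continuous_on S g" "\<And>p. p \<in> S \<Longrightarrow> \<mu> \<le> \<bar>g p\<bar>" "0 < \<mu>"
  shows "(\<forall>p\<in>S. \<mu> \<le> g p) \<or> (\<forall>p\<in>S. \<mu> \<le> - g p)"
proof (rule ccontr)
  assume "\<not> ?thesis"
  then obtain p q where pq: "p \<in> S" "q \<in> S" "g p < \<mu>" "- g q < \<mu>"
    by auto
  then have "g p \<le> 0" "0 \<le> g q"
    using assms(3)[of p] assms(3)[of q] by auto
  moreover have "connected (g ` S)"
    using assms(2,1) by (rule connected_continuous_image)
  ultimately have "0 \<in> g ` S"
    using pq(1,2) unfolding connected_iff_interval by blast
  then show False
    using assms(3,4) by force
qed

lemma graph_box_of_pderiv_abs_ge:
  assumes root: "eval2 f (x0, y0) = 0" and "0 < \<epsilon>" "0 < \<mu>"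
    and deriv: "\<And>x y. x \<in> {x0 - \<delta>..x0 + \<delta>} \<Longrightarrow> y \<in> {y0 - \<epsilon>..y0 + \<epsilon>} \<Longrightarrow>
      \<mu> \<le> \<bar>eval2 (pderiv f) (x, y)\<bar>"
    and close: "\<And>x y. x \<in> {x0 - \<delta>..x0 + \<delta>} \<Longrightarrow> y \<in> {y0 - \<epsilon>, y0 + \<epsilon>} \<Longrightarrow>
      \<bar>eval2 f (x, y) - eval2 f (x0, y)\<bar> < \<epsilon> * \<mu>"
  shows "graph_box (zero_set f) (x0 - \<delta>) (x0 + \<delta>) (y0 - \<epsilon>) (y0 + \<epsilon>)"
proof -
  let ?B = "{x0 - \<delta>..x0 + \<delta>} \<times> {y0 - \<epsilon>..y0 + \<epsilon>}"
  have "(\<forall>p\<in>?B. \<mu> \<le> eval2 (pderiv f) p) \<or> (\<forall>p\<in>?B. \<mu> \<le> - eval2 (pderiv f) p)"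
    using deriv \<open>0 < \<mu>\<close>
    by (intro connected_abs_ge_sign_cases connected_Times connected_Icc continuous_on_eval2
        continuous_on_id) auto
  then show ?thesis
  proof
    assume pos: "\<forall>p\<in>?B. \<mu> \<le> eval2 (pderiv f) p"
    show ?thesis
      by (rule graph_box_of_pderiv_ge[OF root \<open>0 < \<epsilon>\<close> \<open>0 < \<mu>\<close> _ close]) (use pos in blast)
  next
    assume neg: "\<forall>p\<in>?B. \<mu> \<le> - eval2 (pderiv f) p"
    have "graph_box (zero_set (- f)) (x0 - \<delta>) (x0 + \<delta>) (y0 - \<epsilon>) (y0 + \<epsilon>)"
    proof (rule graph_box_of_pderiv_ge[OF _ \<open>0 < \<epsilon>\<close> \<open>0 < \<mu>\<close>])
      show "eval2 (- f) (x0, y0) = 0"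
        using root by (simp add: eval2_minus)
      fix x y assume x: "x \<in> {x0 - \<delta>..x0 + \<delta>}"
      {
        assume "y \<in> {y0 - \<epsilon>..y0 + \<epsilon>}"
        with x neg show "\<mu> \<le> eval2 (pderiv (- f)) (x, y)"
          by (simp add: pderiv_minus eval2_minus)
      next
        assume "y \<in> {y0 - \<epsilon>, y0 + \<epsilon>}"
        with close[OF x] show "\<bar>eval2 (- f) (x, y) - eval2 (- f) (x0, y)\<bar> < \<epsilon> * \<mu>"
          by (simp add: eval2_minus abs_minus_commute)
      }
    qed
    then show ?thesis
      by (simp add: zero_set_minus)
  qed
qed

lemma uniformly_nonzero_near_compact:
  fixes g :: "'a::metric_space \<Rightarrow> real"
  assumes "compact K" "continuous_on UNIV g" "\<And>q. q \<in> K \<Longrightarrow> g q \<noteq> 0"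
  obtains \<mu> r where "0 < \<mu>" "0 < r" "\<And>q p. q \<in> K \<Longrightarrow> dist p q < r \<Longrightarrow> \<mu> \<le> \<bar>g p\<bar>"
proof (cases "K = {}")
  case True
  then show thesis
    using that[of 1 1] by simp
next
  case False
  obtain k where "k \<in> K" and k: "\<And>q. q \<in> K \<Longrightarrow> \<bar>g k\<bar> \<le> \<bar>g q\<bar>"
    using continuous_attains_inf[OF assms(1) False, of "\<lambda>q. \<bar>g q\<bar>"] assms(2)
    by (metis continuous_on_rabs continuous_on_subset top_greatest)
  define \<mu> where "\<mu> = \<bar>g k\<bar> / 2"
  have "0 < \<mu>"
    using assms(3)[OF \<open>k \<in> K\<close>] unfolding \<mu>_def by simp
  have "open {p. \<mu> < \<bar>g p\<bar>}"
    using assms(2) by (intro open_Collect_less continuous_intros)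
  moreover have "K \<subseteq> {p. \<mu> < \<bar>g p\<bar>}"
    using k \<open>0 < \<mu>\<close> unfolding \<mu>_def by fastforce
  ultimately obtain r where "0 < r" and r: "\<And>q. q \<in> K \<Longrightarrow> ball q r \<subseteq> {p. \<mu> < \<bar>g p\<bar>}"
    using Heine_Borel_lemma[OF assms(1), of "{{p. \<mu> < \<bar>g p\<bar>}}"] by auto
  show thesis
  proof (rule that[OF \<open>0 < \<mu>\<close> \<open>0 < r\<close>])
    fix q p assume "q \<in> K" "dist p q < r"
    then have "p \<in> ball q r"
      by (simp add: dist_commute)
    with r[OF \<open>q \<in> K\<close>] show "\<mu> \<le> \<bar>g p\<bar>"
      by auto
  qed
qed

lemma uniformly_continuous_near_bounded:
  fixes g :: "'a::euclidean_space \<Rightarrow> real"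
  assumes "bounded K" "continuous_on UNIV g" "0 < r" "0 < \<eta>"
  obtains \<delta> where "0 < \<delta>"
    "\<And>q p p'. q \<in> K \<Longrightarrow> dist p q < r \<Longrightarrow> dist p' q < r \<Longrightarrow> dist p' p < \<delta> \<Longrightarrow> \<bar>g p' - g p\<bar> < \<eta>"
proof -
  obtain R where R: "\<And>q. q \<in> K \<Longrightarrow> norm q \<le> R"
    using assms(1) unfolding bounded_iff by blast
  have "uniformly_continuous_on (cball 0 (R + r)) g"
    by (intro compact_uniformly_continuous continuous_on_subset[OF assms(2)]) auto
  then obtain \<delta> where "0 < \<delta>" and \<delta>: "\<And>p p'. p \<in> cball 0 (R + r) \<Longrightarrow> p' \<in> cball 0 (R + r) \<Longrightarrow>
      dist p' p < \<delta> \<Longrightarrow> dist (g p') (g p) < \<eta>"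
    using assms(4) unfolding uniformly_continuous_on_def by blast
  have in_ball: "p \<in> cball 0 (R + r)" if "q \<in> K" "dist p q < r" for p q
    using R[OF that(1)] that(2) norm_triangle_ineq2[of p q] by (simp add: dist_norm)
  show thesis
  proof (rule that[OF \<open>0 < \<delta>\<close>])
    fix q p p' assume "q \<in> K" "dist p q < r" "dist p' q < r" "dist p' p < \<delta>"
    then show "\<bar>g p' - g p\<bar> < \<eta>"
      using \<delta>[OF in_ball in_ball] by (simp add: dist_real_def)
  qed
qed

lemma dist_Pair_le_sum: "dist (x, y) (x', y') \<le> \<bar>x - x'\<bar> + \<bar>y - y'\<bar>"
  using sqrt_sum_squares_le_sum_abs[of "x - x'" "y - y'"] by (simp add: dist_Pair_Pair dist_real_def)

lemma uniform_graph_boxes: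
  assumes cpt: "compact (zero_set f)"
    and regular: "\<And>x y. x \<in> {a..b} \<Longrightarrow> eval2 f (x, y) = 0 \<Longrightarrow> eval2 (pderiv f) (x, y) \<noteq> 0"
  obtains \<delta> \<epsilon> where "0 < \<delta>" "0 < \<epsilon>" "\<And>q. q \<in> zero_set f \<Longrightarrow> fst q \<in> {a..b} \<Longrightarrow>
    graph_box (zero_set f) (fst q - \<delta>) (fst q + \<delta>) (snd q - \<epsilon>) (snd q + \<epsilon>)"
proof -
  define K where "K = zero_set f \<inter> ({a..b} \<times> UNIV)"
  have "compact K"
    unfolding K_def using cpt by (intro compact_Int_closed closed_Times) auto
  moreover have "eval2 (pderiv f) q \<noteq> 0" if "q \<in> K" for q
    using that regular unfolding K_def zero_set_def by (cases q) auto
  ultimately obtain \<mu> r where "0 < \<mu>" "0 < r"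
    and Fy: "\<And>q p. q \<in> K \<Longrightarrow> dist p q < r \<Longrightarrow> \<mu> \<le> \<bar>eval2 (pderiv f) p\<bar>"
    using uniformly_nonzero_near_compact continuous_on_eval2_UNIV by blast
  define \<epsilon> where "\<epsilon> = r / 2"
  have "0 < \<epsilon> * \<mu>"
    using \<open>0 < r\<close> \<open>0 < \<mu>\<close> unfolding \<epsilon>_def by simp
  then obtain \<delta>1 where "0 < \<delta>1" and close: "\<And>q p p'. q \<in> zero_set f \<Longrightarrow> dist p q < r \<Longrightarrow>
      dist p' q < r \<Longrightarrow> dist p' p < \<delta>1 \<Longrightarrow> \<bar>eval2 f p' - eval2 f p\<bar> < \<epsilon> * \<mu>"
    by (rule uniformly_continuous_near_bounded[OF compact_imp_bounded[OF cpt]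
          continuous_on_eval2_UNIV[of f] \<open>0 < r\<close>]) blast
  define \<delta> where "\<delta> = min (\<delta>1 / 2) (r / 4)"
  have "0 < \<delta>" "\<delta> < \<delta>1" "0 < \<epsilon>"
    using \<open>0 < \<delta>1\<close> \<open>0 < r\<close> unfolding \<delta>_def \<epsilon>_def by auto
  have near: "dist (x, y) q < r" if "\<bar>x - fst q\<bar> \<le> \<delta>" "\<bar>y - snd q\<bar> \<le> \<epsilon>" for q x y
    using dist_Pair_le_sum[of x y "fst q" "snd q"] that \<open>0 < r\<close> unfolding \<delta>_def \<epsilon>_def by simp
  have deriv: "\<mu> \<le> \<bar>eval2 (pderiv f) (x, y)\<bar>"
    if "q \<in> K" "x \<in> {fst q - \<delta>..fst q + \<delta>}" "y \<in> {snd q - \<epsilon>..snd q + \<epsilon>}" for q x y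
    using that by (intro Fy near) auto
  have edges: "\<bar>eval2 f (x, y) - eval2 f (fst q, y)\<bar> < \<epsilon> * \<mu>"
    if q: "q \<in> zero_set f" and "x \<in> {fst q - \<delta>..fst q + \<delta>}" "y \<in> {snd q - \<epsilon>, snd q + \<epsilon>}"
    for q x y
  proof -
    have "\<bar>x - fst q\<bar> \<le> \<delta>" "\<bar>fst q - fst q\<bar> \<le> \<delta>" "\<bar>y - snd q\<bar> \<le> \<epsilon>"
      using that \<open>0 < \<delta>\<close> \<open>0 < \<epsilon>\<close> by auto
    then have "dist (x, y) q < r" "dist (fst q, y) q < r" "dist (x, y) (fst q, y) < \<delta>1"
      using near \<open>\<delta> < \<delta>1\<close> by (auto simp: dist_Pair_Pair dist_real_def)
    then show ?thesis
      using close[OF q] by blast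
  qed
  show thesis
  proof (rule that[OF \<open>0 < \<delta>\<close> \<open>0 < \<epsilon>\<close>])
    fix q assume q: "q \<in> zero_set f" "fst q \<in> {a..b}"
    then have "q \<in> K"
      unfolding K_def by (cases q) auto
    show "graph_box (zero_set f) (fst q - \<delta>) (fst q + \<delta>) (snd q - \<epsilon>) (snd q + \<epsilon>)"
      by (rule graph_box_of_pderiv_abs_ge[OF _ \<open>0 < \<epsilon>\<close> \<open>0 < \<mu>\<close> deriv[OF \<open>q \<in> K\<close>] edges[OF q(1)]])
        (use q(1) in \<open>simp add: zero_set_def\<close>)
  qed
qed

lemma locally_graph_zero_set:
  assumes "compact (zero_set f)" "finite (critical_abscissae f)" "x \<notin> critical_abscissae f"
  shows "locally_graph (zero_set f) x"
proof -
  obtain \<eta> where "0 < \<eta>" and \<eta>: "\<And>x'. x' \<in> critical_abscissae f \<Longrightarrow> x' \<noteq> x \<Longrightarrow> \<eta> \<le> dist x x'"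
    using finite_set_avoid[OF assms(2)] by blast
  have "eval2 (pderiv f) (x', y) \<noteq> 0"
    if "x' \<in> {x - \<eta> / 2..x + \<eta> / 2}" "eval2 f (x', y) = 0" for x' y
  proof
    assume "eval2 (pderiv f) (x', y) = 0"
    with that(2) have "x' \<in> critical_abscissae f"
      unfolding critical_abscissae_def by blast
    with assms(3) \<eta> have "\<eta> \<le> dist x x'"
      by blast
    with that(1) \<open>0 < \<eta>\<close> show False
      by (auto simp: dist_real_def)
  qed
  then obtain \<delta> \<epsilon> where "0 < \<delta>" and boxes: "\<And>q. q \<in> zero_set f \<Longrightarrow> fst q \<in> {x - \<eta> / 2..x + \<eta> / 2} \<Longrightarrow>
      graph_box (zero_set f) (fst q - \<delta>) (fst q + \<delta>) (snd q - \<epsilon>) (snd q + \<epsilon>)" "0 < \<epsilon>"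
    using uniform_graph_boxes[OF assms(1)] by metis
  define \<rho> where "\<rho> = min \<delta> (\<eta> / 2) / 2"
  have "graph_strip (zero_set f) s s'" if "x - \<rho> < s" "s' < x + \<rho>" for s s'
    unfolding graph_strip_def
  proof (intro ballI impI)
    fix q assume q: "q \<in> zero_set f" "fst q \<in> {s<..<s'}"
    then have "fst q \<in> {x - \<eta> / 2..x + \<eta> / 2}" "fst q - \<delta> \<le> s" "s' \<le> fst q + \<delta>"
      using that unfolding \<rho>_def by auto
    then show "\<exists>\<epsilon>>0. graph_box (zero_set f) s s' (snd q - \<epsilon>) (snd q + \<epsilon>)"
      using boxes(1)[OF q(1)] graph_box_mono \<open>0 < \<epsilon>\<close> by blast
  qed
  moreover have "0 < \<rho>"
    using \<open>0 < \<delta>\<close> \<open>0 < \<eta>\<close> unfolding \<rho>_def by simp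
  ultimately show ?thesis
    unfolding locally_graph_def by blast
qed

theorem theorem2p3:
  fixes f :: "real poly poly"
  assumes "irreducible f"
    and "compact (zero_set f)"
    and "connected (zero_set f)"
  shows "\<exists>\<A>. cell_decomposition \<A> (zero_set f) \<and> finiteness_property \<A> (zero_set f)"
proof (intro exI conjI)
  have closed: "closed (zero_set f)"
    by (rule closed_zero_set)
  have critical: "finite (critical_abscissae f)"
    using assms(1,2) by (rule finite_critical_xs)
  show "cell_decomposition (dyadic_cells (zero_set f)) (zero_set f)"
  proof (rule cell_decomposition_dyadic_cells[OF closed])
    show "zero_set f \<in> semialgebraic"
      unfolding zero_set_def by (rule sa_zero)
    show "countable (zero_set f \<inter> ({x} \<times> UNIV))" for x
      using finite_zero_set_slice[OF assms(2)] by (rule countable_finite)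
    show "countable (critical_abscissae f)"
      using critical by (rule countable_finite)
    show "locally_graph (zero_set f) x" if "x \<notin> critical_abscissae f" for x
      using assms(2) critical that by (rule locally_graph_zero_set)
  qed
  show "finiteness_property (dyadic_cells (zero_set f)) (zero_set f)"
    using closed by (rule finiteness_property_dyadic_cells)
qed

end
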